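(* If $\|g\|_{L^\infty(\mathbb{R}^n)}\le\kappa_3/2$, then for every set $F\subseteq\mathbb{R}^n$ and every $R>1$, $$\mathcal E(F,B_R):=\iint_{B_R\times\mathbb{R}^n}\chi_F(x)\chi_{F^c}(y)K(x,y)\,dx\,dy+\int_{\mathcal Q(B_R)_1\cap F}g(x)\,dx\ \ge\ 0.$$
   Context: Standing assumptions: $n\ge2$, $Q=(0,1)^n$. The kernel $K:\mathbb{R}^n\times\mathbb{R}^n\to[0,\infty)$ is measurable and satisfies: (K1) $K(y,x)=K(x,y)=K(x+w,y+w)=K(Rx,Ry)$ for all $x,y,w\in\mathbb{R}^n$ and all $R\in SO(n)$; (K2) $\int_{\mathbb{R}^n}|h|\,K(h,0)\,dh<\infty$; (K3) there are constants $0<s_1<\tfrac12<s_2<1$, $\delta>0$ and $0<\kappa_1\le\kappa_2$ such that $\kappa_1\,\chi_{(0,\delta)}(|x-y|)\,|x-y|^{-n-2s_1}\le K(x,y)\le\kappa_2\min\{|x-y|^{-n-2s_1},|x-y|^{-n-2s_2}\}$ for all $x\neq y$; (K4) $\inf_{(x,y)\in Q\times Q}K(x,y)\ge\kappa_3$ for some constant $\kappa_3>0$. The forcing term $g\in L^\infty(\mathbb{R}^n)$ is $\mathbb{Z}^n$-periodic with $\int_Q g(x)\,dx=0$. $B_R$ is the open ball of radius $R$ centered at the origin, $F^c=\mathbb{R}^n\setminus F$, and $\mathcal Q(B_R)_1$ is the union of all cubes $k+Q$, $k\in\mathbb{Z}^n$, contained in $B_R$. *)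

theory Defs
  imports "HOL-Analysis.Analysis"
begin

text \<open>Points of R^n are vectors of type real^'n; n = CARD('n).\<close>

definition int_vec :: "real^'n \<Rightarrow> bool" where
  "int_vec k \<longleftrightarrow> (\<forall>i. k $ i \<in> \<int>)"

definition unit_cube :: "(real^'n) set" where
  "unit_cube = box 0 One"

definition SO_mat :: "real^'n^'n \<Rightarrow> bool" where
  "SO_mat R \<longleftrightarrow> orthogonal_matrix R \<and> det R = 1"

definition cube_union :: "(real^'n) set \<Rightarrow> (real^'n) set" where
  "cube_union E = \<Union>{(\<lambda>x. k + x) ` unit_cube | k. int_vec k \<and> (\<lambda>x. k + x) ` unit_cube \<subseteq> E}"

definition kernel_ok :: "(real^'n \<Rightarrow> real^'n \<Rightarrow> real) \<Rightarrow> real \<Rightarrow> bool" where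
  "kernel_ok K \<kappa>3 \<longleftrightarrow>
     (\<lambda>(x,y). K x y) \<in> borel_measurable (lborel \<Otimes>\<^sub>M lborel) \<and>
     (\<forall>x y. K x y \<ge> 0) \<and>
     \<comment> \<open>(K1)\<close>
     (\<forall>x y. K y x = K x y) \<and>
     (\<forall>x y w. K (x + w) (y + w) = K x y) \<and>
     (\<forall>x y R. SO_mat R \<longrightarrow> K (R *v x) (R *v y) = K x y) \<and>
     \<comment> \<open>(K2)\<close>
     (\<integral>\<^sup>+ h. ennreal (norm h * K h 0) \<partial>lborel) < \<infinity> \<and>
     \<comment> \<open>(K3)\<close>
     (\<exists>s1 s2 \<delta> \<kappa>1 \<kappa>2. 0 < s1 \<and> s1 < 1/2 \<and> 1/2 < s2 \<and> s2 < 1 \<and> \<delta> > 0 \<and>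
        0 < \<kappa>1 \<and> \<kappa>1 \<le> \<kappa>2 \<and>
        (\<forall>x y. x \<noteq> y \<longrightarrow>
           \<kappa>1 * indicator {0<..<\<delta>} (dist x y) * dist x y powr (- real CARD('n) - 2 * s1) \<le> K x y \<and>
           K x y \<le> \<kappa>2 * min (dist x y powr (- real CARD('n) - 2 * s1))
                              (dist x y powr (- real CARD('n) - 2 * s2)))) \<and>
     \<comment> \<open>(K4)\<close>
     \<kappa>3 > 0 \<and> (\<forall>x\<in>unit_cube. \<forall>y\<in>unit_cube. K x y \<ge> \<kappa>3)"

definition forcing_ok :: "(real^'n \<Rightarrow> real) \<Rightarrow> bool" where
  "forcing_ok g \<longleftrightarrow>
     g \<in> borel_measurable lebesgue \<and>
     (\<exists>C. AE x in lebesgue. \<bar>g x\<bar> \<le> C) \<and>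
     (\<forall>x k. int_vec k \<longrightarrow> g (x + k) = g x) \<and>
     (LINT x : unit_cube | lebesgue. g x) = 0"

text \<open>The energy E(F, B_R) (extended real; the interaction term may be infinite).\<close>
definition energy ::
  "(real^'n \<Rightarrow> real^'n \<Rightarrow> real) \<Rightarrow> (real^'n \<Rightarrow> real) \<Rightarrow> (real^'n) set \<Rightarrow> real \<Rightarrow> ereal" where
  "energy K g F R =
     enn2ereal (\<integral>\<^sup>+ x. \<integral>\<^sup>+ y. indicator (ball 0 R) x * indicator F x * indicator (- F) y
                              * ennreal (K x y) \<partial>lebesgue \<partial>lebesgue)
     + ereal (LINT x : cube_union (ball 0 R) \<inter> F | lebesgue. g x)"

end

theory Submission
  imports Defs
begin

(* Only the unit lattice cubes Q inside B_R matter. Write a = |Q \<inter> F| and b = |Q - F|, so a + b = 1.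
   As g has zero mean on Q, the integrals of g over Q \<inter> F and Q - F cancel, hence
   |\<integral>_(Q \<inter> F) g| \<le> (\<kappa>3/2) min a b \<le> \<kappa>3 a b.  By translation invariance and (K4), K \<ge> \<kappa>3 on Q \<times> Q,
   so the interaction of Q \<inter> F with Q - F alone is at least \<kappa>3 a b.  Summing over the disjoint
   cubes gives E(F, B_R) \<ge> 0. *)

lemma finite_vectors_with_finite_components:
  fixes B :: "'n::finite \<Rightarrow> 'a set"
  assumes "\<And>i. finite (B i)"
  shows "finite {V :: 'a^'n. \<forall>i. V $ i \<in> B i}"
proof (rule finite_imageD)
  show "finite (vec_nth ` {V :: 'a^'n. \<forall>i. V $ i \<in> B i})"
    by (rule finite_subset[of _ "Pi\<^sub>E UNIV B"]) (auto intro: finite_PiE assms)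
qed (simp add: inj_on_def vec_nth_inject)

lemma finite_int_vec_bounded:
  assumes "bounded S"
  shows "finite {k :: real^'n. int_vec k \<and> k \<in> S}"
proof -
  obtain B where B: "\<And>x. x \<in> S \<Longrightarrow> norm x \<le> B"
    using assms bounded_iff by blast
  have "{k. int_vec k \<and> k \<in> S} \<subseteq> {V. \<forall>i. V $ i \<in> {t. t \<in> \<int> \<and> \<bar>t\<bar> \<le> B}}"
    using B component_le_norm_cart order_trans unfolding int_vec_def by blast
  then show ?thesis
    by (rule finite_subset) (intro finite_vectors_with_finite_components finite_abs_int_segment)
qed

lemma mem_unit_box_cart:
  "x \<in> box k (k + One) \<longleftrightarrow> (\<forall>i. k $ i < x $ i \<and> x $ i < k $ i + 1)"
  for x k :: "real^'n"
  by (simp add: mem_box_cart flip: Cart_1)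

lemma mem_unit_cube_cart: "x \<in> unit_cube \<longleftrightarrow> (\<forall>i. 0 < x $ i \<and> x $ i < 1)"
  using mem_unit_box_cart[of x 0] by (simp add: unit_cube_def)

lemma translate_unit_cube: "(\<lambda>x. k + x) ` unit_cube = box k (k + One :: real^'n)"
proof -
  have "x \<in> box k (k + One) \<longleftrightarrow> x - k \<in> unit_cube" for x
    by (simp add: mem_unit_cube_cart mem_unit_box_cart algebra_simps)
  moreover have "x \<in> (\<lambda>x. k + x) ` unit_cube \<longleftrightarrow> x - k \<in> unit_cube" for x
    by (auto simp: image_iff) (metis add.commute diff_add_cancel)
  ultimately show ?thesis
    by blast
qed

definition cube_indices :: "(real^'n) set \<Rightarrow> (real^'n) set" where
  "cube_indices E = {k. int_vec k \<and> box k (k + One) \<subseteq> E}"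

lemma cube_union_eq_Union_boxes: "cube_union E = (\<Union>k\<in>cube_indices E. box k (k + One))"
  unfolding cube_union_def cube_indices_def translate_unit_cube by auto

lemma disjoint_int_vec_boxes:
  "disjoint_family_on (\<lambda>k. box k (k + One :: real^'n)) {k. int_vec k}"
  unfolding disjoint_family_on_def
proof (intro ballI impI)
  fix k j :: "real^'n"
  assume "k \<in> {k. int_vec k}" "j \<in> {k. int_vec k}" "k \<noteq> j"
  then obtain i where "k $ i \<noteq> j $ i" "k $ i \<in> \<int>" "j $ i \<in> \<int>"
    by (metis int_vec_def mem_Collect_eq vec_eq_iff)
  then have "1 \<le> \<bar>k $ i - j $ i\<bar>"
    by (metis Ints_diff Ints_nonzero_abs_ge1 right_minus_eq)
  then have "x \<notin> box k (k + One) \<inter> box j (j + One)" for x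
    unfolding Int_iff mem_unit_box_cart by (smt (verit))
  then show "box k (k + One) \<inter> box j (j + One) = {}"
    by blast
qed

lemma finite_cube_indices:
  assumes "bounded E"
  shows "finite (cube_indices E)"
  unfolding cube_indices_def
proof (rule finite_subset)
  have "k \<in> closure (box k (k + One))" for k :: "real^'n"
  proof -
    have "k + (1/2) *\<^sub>R One \<in> box k (k + One)" "k \<in> cbox k (k + One)"
      by (simp_all add: mem_box_cart flip: Cart_1)
    then show ?thesis
      by (subst closure_box) auto
  qed
  then show "{k. int_vec k \<and> box k (k + One) \<subseteq> E} \<subseteq> {k. int_vec k \<and> k \<in> closure E}"
    using closure_mono by blast
qed (use assms in \<open>simp add: finite_int_vec_bounded bounded_closure\<close>)

lemma emeasure_lebesgue_unit_box: "emeasure lebesgue (box k (k + One :: real^'n)) = 1"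
  by (simp add: inner_add_left)

lemma unit_box_lmeasurable: "box k (k + One :: real^'n) \<in> lmeasurable"
  by (simp add: fmeasurable_def emeasure_lebesgue_unit_box)

lemma measure_lebesgue_unit_box: "measure lebesgue (box k (k + One :: real^'n)) = 1"
  by (simp add: measure_def emeasure_lebesgue_unit_box)

lemma kernel_ok_ge_on_box:
  assumes "kernel_ok K \<kappa>3" "x \<in> box k (k + One)" "y \<in> box k (k + One)"
  shows "\<kappa>3 \<le> K x y"
proof -
  have translation_invariant: "K (x' + w) (y' + w) = K x' y'" for x' y' w
    using assms(1) unfolding kernel_ok_def by blast
  have bound: "\<kappa>3 \<le> K x' y'" if "x' \<in> unit_cube" "y' \<in> unit_cube" for x' y'
    using assms(1) that unfolding kernel_ok_def by blast
  have "x - k \<in> unit_cube" "y - k \<in> unit_cube"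
    using assms(2,3) by (simp_all add: mem_unit_cube_cart mem_unit_box_cart algebra_simps)
  then show ?thesis
    using bound translation_invariant[of "x - k" k "y - k"] by simp
qed

lemma forcing_ok_set_integrable:
  assumes "forcing_ok g" "S \<in> lmeasurable"
  shows "set_integrable lebesgue S g"
proof -
  obtain C where "AE x in lebesgue. \<bar>g x\<bar> \<le> C" "g \<in> borel_measurable lebesgue"
    using assms(1) unfolding forcing_ok_def by blast
  moreover have "S \<in> sets lebesgue" "emeasure lebesgue S < \<infinity>"
    using assms(2) unfolding fmeasurable_def by blast+
  ultimately show ?thesis
    unfolding set_integrable_def
    by (intro integrableI_bounded_set_indicator[where B=C]) (auto elim!: eventually_mono)
qed

lemma set_integral_box_translate_periodic:
  fixes g :: "'a::euclidean_space \<Rightarrow> real"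
  assumes periodic: "\<And>x. g (x + k) = g x"
    and "set_integrable lebesgue (box a b) g" "set_integrable lebesgue (box (a + k) (b + k)) g"
  shows "(LINT x : box (a + k) (b + k) | lebesgue. g x) = (LINT x : box a b | lebesgue. g x)"
proof -
  have "g \<circ> (+) k = g"
    using periodic by (simp add: fun_eq_iff add.commute)
  moreover have "(g has_integral integral (cbox a b) g) (cbox a b)"
    using set_lebesgue_integral_eq_integral(1)[OF assms(2)] integrable_on_open_interval by blast
  ultimately have "integral (cbox (a + k) (b + k)) g = integral (cbox a b) g"
    using has_integral_shift_cbox_iff integral_unique by metis
  moreover have "(LINT x : box a b | lebesgue. g x) = integral (cbox a b) g"
    using set_lebesgue_integral_eq_integral(2)[OF assms(2)] by (simp add: integral_open_interval)
  moreover have "(LINT x : box (a + k) (b + k) | lebesgue. g x) = integral (cbox (a + k) (b + k)) g"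
    using set_lebesgue_integral_eq_integral(2)[OF assms(3)] by (simp add: integral_open_interval)
  ultimately show ?thesis
    by simp
qed

lemma forcing_ok_integral_unit_box:
  assumes "forcing_ok g" "int_vec k"
  shows "(LINT x : box k (k + One) | lebesgue. g x) = 0"
proof -
  have integrable: "set_integrable lebesgue (box j (j + One)) g" for j
    by (intro forcing_ok_set_integrable[OF assms(1)] unit_box_lmeasurable)
  have periodic: "g (x + k) = g x" for x
    using assms unfolding forcing_ok_def by blast
  have "(LINT x : box (0 + k) (One + k) | lebesgue. g x) = (LINT x : box 0 One | lebesgue. g x)"
    using integrable[of 0] integrable[of k]
    by (intro set_integral_box_translate_periodic periodic) (simp_all add: add.commute)
  then show ?thesis
    using assms(1) unfolding forcing_ok_def unit_cube_def by (simp add: add.commute)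
qed

lemma abs_set_integral_le_measure:
  fixes g :: "'a \<Rightarrow> real"
  assumes S: "S \<in> fmeasurable M" and g: "set_integrable M S g"
    and bound: "AE x in M. \<bar>g x\<bar> \<le> c"
  shows "\<bar>LINT x:S|M. g x\<bar> \<le> c * measure M S"
proof -
  have const: "set_integrable M S (\<lambda>_. c)"
    using S unfolding set_integrable_def fmeasurable_def by (intro integrable_indicator) blast+
  have "\<bar>LINT x:S|M. g x\<bar> \<le> (LINT x:S|M. \<bar>g x\<bar>)"
    using set_integral_norm_bound[OF g] by simp
  also have "\<dots> \<le> (LINT x:S|M. c)"
    using bound by (intro set_integral_mono_AE set_integrable_abs g const) (auto elim: eventually_mono)
  also have "\<dots> = c * measure M S"
    using S by (simp add: set_integral_const fmeasurableD2)
  finally show ?thesis .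
qed

lemma min_le_twice_product:
  fixes a b :: real
  assumes "a + b = 1" "0 \<le> a" "0 \<le> b"
  shows "min a b \<le> 2 * a * b"
proof (cases "a \<le> b")
  case True
  then have "a * 1 \<le> a * (2 * b)"
    using assms by (intro mult_left_mono) auto
  then show ?thesis
    using True by (simp add: min_def algebra_simps)
next
  case False
  then have "b * 1 \<le> b * (2 * a)"
    using assms by (intro mult_left_mono) auto
  then show ?thesis
    using False by (simp add: min_def algebra_simps)
qed

lemma forcing_integral_unit_box_Int_ge:
  assumes g: "forcing_ok g" "AE x in lebesgue. \<bar>g x\<bar> \<le> \<kappa> / 2"
    and k: "int_vec k" and F: "F \<in> sets lebesgue" and "0 \<le> \<kappa>"
  shows "- (\<kappa> * measure lebesgue (box k (k + One) \<inter> F) * measure lebesgue (box k (k + One) - F))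
    \<le> (LINT x : box k (k + One) \<inter> F | lebesgue. g x)"
proof -
  define Q where "Q = box k (k + One)"
  define a where "a = measure lebesgue (Q \<inter> F)"
  define b where "b = measure lebesgue (Q - F)"
  have QF: "Q \<inter> F \<in> lmeasurable" "Q - F \<in> lmeasurable"
    using unit_box_lmeasurable F unfolding Q_def by (auto intro: fmeasurable_Int_fmeasurable fmeasurable_Diff)
  have integrable: "set_integrable lebesgue (Q \<inter> F) g" "set_integrable lebesgue (Q - F) g"
    using QF by (simp_all add: forcing_ok_set_integrable[OF g(1)])
  have Q_split: "Q = (Q \<inter> F) \<union> (Q - F)"
    by blast
  have "1 = measure lebesgue Q"
    unfolding Q_def by (rule measure_lebesgue_unit_box[symmetric])
  also have "\<dots> = a + b"
    unfolding a_def b_def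
    by (subst Q_split, subst measure_Un2[OF QF]) (simp add: Diff_Int_distrib2 Diff_triv)
  finally have "a + b = 1" ..
  have "(LINT x : Q \<inter> F | lebesgue. g x) + (LINT x : Q - F | lebesgue. g x) = (LINT x : Q | lebesgue. g x)"
    by (subst (3) Q_split, rule set_integral_Un[OF _ integrable, symmetric]) blast
  also have "\<dots> = 0"
    unfolding Q_def using forcing_ok_integral_unit_box[OF g(1) k] .
  finally have "\<bar>LINT x : Q \<inter> F | lebesgue. g x\<bar> \<le> \<kappa> / 2 * min a b"
    using abs_set_integral_le_measure[OF QF(1) integrable(1) g(2)]
      abs_set_integral_le_measure[OF QF(2) integrable(2) g(2)]
    unfolding a_def b_def by linarith
  also have "\<dots> \<le> \<kappa> / 2 * (2 * a * b)"
    using min_le_twice_product[OF \<open>a + b = 1\<close>] \<open>0 \<le> \<kappa>\<close>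
    by (intro mult_left_mono) (auto simp: a_def b_def)
  finally show ?thesis
    unfolding a_def b_def Q_def by linarith
qed

definition cube_interface :: "(real^'n) set \<Rightarrow> (real^'n) set \<Rightarrow> real" where
  "cube_interface E F =
     (\<Sum>k\<in>cube_indices E. measure lebesgue (box k (k + One) \<inter> F) * measure lebesgue (box k (k + One) - F))"

lemma forcing_integral_cube_union_Int_ge:
  assumes g: "forcing_ok g" "AE x in lebesgue. \<bar>g x\<bar> \<le> \<kappa> / 2" "0 \<le> \<kappa>"
    and E: "bounded E" and F: "F \<in> sets lebesgue"
  shows "- (\<kappa> * cube_interface E F) \<le> (LINT x : cube_union E \<inter> F | lebesgue. g x)"
proof -
  have "cube_union E \<inter> F = (\<Union>k\<in>cube_indices E. box k (k + One) \<inter> F)"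
    by (auto simp: cube_union_eq_Union_boxes)
  moreover have "x \<in> box i (i + One) \<and> x \<in> box j (j + One) \<longrightarrow> i = j"
    if "i \<in> cube_indices E" "j \<in> cube_indices E" for i j x
    using disjoint_int_vec_boxes that unfolding disjoint_family_on_def cube_indices_def by blast
  ultimately have "(LINT x : cube_union E \<inter> F | lebesgue. g x)
      = (\<Sum>k\<in>cube_indices E. LINT x : box k (k + One) \<inter> F | lebesgue. g x)"
    using F by (simp only:, intro set_integral_finite_UN_AE finite_cube_indices E AE_I2
        forcing_ok_set_integrable g(1) fmeasurable_Int_fmeasurable unit_box_lmeasurable) auto
  moreover have "(\<Sum>k\<in>cube_indices E. - (\<kappa> * measure lebesgue (box k (k + One) \<inter> F)
        * measure lebesgue (box k (k + One) - F)))
      \<le> (\<Sum>k\<in>cube_indices E. LINT x : box k (k + One) \<inter> F | lebesgue. g x)"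
    using forcing_integral_unit_box_Int_ge[OF g(1,2) _ F g(3)]
    by (intro sum_mono) (simp add: cube_indices_def)
  ultimately show ?thesis
    by (simp add: cube_interface_def sum_distrib_left sum_negf mult.assoc)
qed

lemma nn_integral_interaction_ge_sum:
  fixes K :: "'a \<Rightarrow> 'a \<Rightarrow> real" and Q :: "'i \<Rightarrow> 'a set"
  assumes C: "finite C" "disjoint_family_on Q C"
    and Q: "\<And>k. k \<in> C \<Longrightarrow> Q k \<in> fmeasurable M" "\<And>k. k \<in> C \<Longrightarrow> Q k \<subseteq> E"
    and F: "F \<in> sets M" and "0 \<le> \<kappa>"
    and K: "\<And>k x y. k \<in> C \<Longrightarrow> x \<in> Q k \<Longrightarrow> y \<in> Q k \<Longrightarrow> \<kappa> \<le> K x y"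
  shows "ennreal (\<kappa> * (\<Sum>k\<in>C. measure M (Q k \<inter> F) * measure M (Q k - F)))
    \<le> (\<integral>\<^sup>+ x. \<integral>\<^sup>+ y. indicator E x * indicator F x * indicator (- F) y * ennreal (K x y) \<partial>M \<partial>M)"
proof -
  define c where "c k = ennreal \<kappa> * emeasure M (Q k - F)" for k
  have QF: "Q k \<inter> F \<in> fmeasurable M" "Q k - F \<in> fmeasurable M" if "k \<in> C" for k
    using Q(1)[OF that] F by (auto intro: fmeasurable_Int_fmeasurable fmeasurable_Diff)
  have pointwise: "(\<Sum>k\<in>C. c k * indicator (Q k \<inter> F) x)
      \<le> (\<integral>\<^sup>+ y. indicator E x * indicator F x * indicator (- F) y * ennreal (K x y) \<partial>M)" for x
  proof (cases "\<exists>j\<in>C. x \<in> Q j \<inter> F")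
    case True
    then obtain j where j: "j \<in> C" "x \<in> Q j \<inter> F"
      by blast
    have "disjoint_family_on (\<lambda>k. Q k \<inter> F) C"
      using C(2) by (auto simp: disjoint_family_on_def)
    then have "(\<Sum>k\<in>C. c k * indicator (Q k \<inter> F) x) = c j"
      by (rule sum_indicator_disjoint_family[where A="\<lambda>k. Q k \<inter> F", OF _ j(2) C(1) j(1)])
    also have "\<dots> = (\<integral>\<^sup>+ y. ennreal \<kappa> * indicator (Q j - F) y \<partial>M)"
      using QF(2)[OF j(1)] by (simp add: c_def nn_integral_cmult_indicator fmeasurableD)
    also have "\<dots> \<le> (\<integral>\<^sup>+ y. indicator E x * indicator F x * indicator (- F) y * ennreal (K x y) \<partial>M)"
    proof (intro nn_integral_mono)
      fix y
      show "ennreal \<kappa> * indicator (Q j - F) y \<le> indicator E x * indicator F x * indicator (- F) y * ennreal (K x y)"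
      proof (cases "y \<in> Q j - F")
        case True
        have "\<kappa> \<le> K x y" "x \<in> E"
          using True j K[OF j(1)] Q(2)[OF j(1)] by auto
        then show ?thesis
          using True j by (simp add: ennreal_leI)
      qed simp
    qed
    finally show ?thesis .
  qed (auto intro: sum.neutral)
  have "ennreal (\<kappa> * (\<Sum>k\<in>C. measure M (Q k \<inter> F) * measure M (Q k - F)))
      = (\<Sum>k\<in>C. c k * emeasure M (Q k \<inter> F))"
    using \<open>0 \<le> \<kappa>\<close> QF
    by (subst sum_distrib_left, subst sum_ennreal[symmetric])
       (auto simp: c_def emeasure_eq_measure2 ennreal_mult' mult_ac intro!: sum.cong)
  also have "\<dots> = (\<Sum>k\<in>C. \<integral>\<^sup>+ x. c k * indicator (Q k \<inter> F) x \<partial>M)"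
    using QF by (intro sum.cong refl) (simp add: nn_integral_cmult_indicator fmeasurableD)
  also have "\<dots> = (\<integral>\<^sup>+ x. (\<Sum>k\<in>C. c k * indicator (Q k \<inter> F) x) \<partial>M)"
    using QF by (intro nn_integral_sum[symmetric]) (simp add: fmeasurableD)
  also have "\<dots> \<le> (\<integral>\<^sup>+ x. \<integral>\<^sup>+ y. indicator E x * indicator F x * indicator (- F) y * ennreal (K x y) \<partial>M \<partial>M)"
    by (intro nn_integral_mono pointwise)
  finally show ?thesis .
qed

theorem mainTheorem12:
  fixes K :: "real^'n \<Rightarrow> real^'n \<Rightarrow> real" and g :: "real^'n \<Rightarrow> real" and \<kappa>3 :: real
  assumes "CARD('n) \<ge> 2"
    and "kernel_ok K \<kappa>3"
    and "forcing_ok g"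
    and "AE x in lebesgue. \<bar>g x\<bar> \<le> \<kappa>3 / 2"
  shows "\<forall>F R. F \<in> sets lebesgue \<longrightarrow> R > 1 \<longrightarrow> energy K g F R \<ge> 0"
proof (intro allI impI)
  fix F :: "(real^'n) set" and R :: real
  assume F: "F \<in> sets lebesgue"
  let ?I = "cube_interface (ball 0 R) F"
  let ?interaction = "\<integral>\<^sup>+ x. \<integral>\<^sup>+ y. indicator (ball 0 R) x * indicator F x * indicator (- F) y
      * ennreal (K x y) \<partial>lebesgue \<partial>lebesgue"
  have "0 \<le> \<kappa>3"
    using assms(2) by (simp add: kernel_ok_def)
  then have "0 \<le> \<kappa>3 * ?I"
    unfolding cube_interface_def by (simp add: sum_nonneg)
  have "ennreal (\<kappa>3 * ?I) \<le> ?interaction"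
    unfolding cube_interface_def
    by (intro nn_integral_interaction_ge_sum finite_cube_indices bounded_ball F \<open>0 \<le> \<kappa>3\<close>
        disjoint_family_on_mono[OF _ disjoint_int_vec_boxes] unit_box_lmeasurable
        kernel_ok_ge_on_box[OF assms(2)]) (auto simp: cube_indices_def)
  then have "ereal (\<kappa>3 * ?I) \<le> enn2ereal ?interaction"
    using enn2ereal_ennreal[OF \<open>0 \<le> \<kappa>3 * ?I\<close>] by (simp add: less_eq_ennreal.rep_eq)
  moreover have "- (\<kappa>3 * ?I) \<le> (LINT x : cube_union (ball 0 R) \<inter> F | lebesgue. g x)"
    by (rule forcing_integral_cube_union_Int_ge[OF assms(3,4) \<open>0 \<le> \<kappa>3\<close> bounded_ball F])
  ultimately have "ereal (\<kappa>3 * ?I) + ereal (- (\<kappa>3 * ?I)) \<le> energy K g F R"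
    unfolding energy_def by (intro add_mono) auto
  then show "energy K g F R \<ge> 0"
    by (simp add: zero_ereal_def)
qed

end
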